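(* Let $\ell\ge2$ and let $\lambda$ be an $\ell$-core. Then the $n$-vector $(b_0,\ldots,b_{\ell-1})$ of $\lambda$ equals $\pi_\ell^{-1}(\lambda)$.
   Context: Partitions are in English notation; box $(x,y)$ is in row $x$, column $y$. Hook length of a box: boxes weakly to its right in its row plus boxes strictly below it in its column; an $\ell$-core has no hook length divisible by $\ell$. $n$-vector: set $\lambda_p=0$ for $p$ larger than the number of nonzero parts. For $p\ge1$ let $r_p=\lfloor(\lambda_p-p)/\ell\rfloor+1$ (the region of the box $(p,\lambda_p)$, where region $r$ consists of boxes $(x,y)$ with $(r-1)\ell\le y-x<r\ell$). For $0\le j\le\ell-1$, $b_j=\max\{r_p: p\ge1,\ \lambda_p-p\equiv j\pmod\ell\}$. For $\mathbf{b}=(b_0,\ldots,b_{\ell-1})\in\mathbf{Z}^\ell$ with $\sum b_j=0$, let $X(\mathbf{b})=\{r\ell+j:0\le j\le\ell-1,\ r\in\mathbf{Z},\ r\le b_j\}$ and let $\pi_\ell(\mathbf{b})$ be the partition whose nonzero parts are the positive values of $\#\{y\in\mathbf{Z}\setminus X(\mathbf{b}):y<x\}$, $x\in X(\mathbf{b})$. It is known that $\pi_\ell$ is a bijection from $\{\mathbf{b}\in\mathbf{Z}^\ell:\sum b_j=0\}$ onto the set of $\ell$-cores. *)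

theory Defs
  imports Main "HOL-Library.Multiset"
begin

definition is_partition :: "nat list \<Rightarrow> bool" where
  "is_partition lam \<longleftrightarrow> sorted_wrt (\<ge>) lam \<and> 0 \<notin> set lam"

definition part :: "nat list \<Rightarrow> nat \<Rightarrow> nat" where
  "part lam p = (if 1 \<le> p \<and> p \<le> length lam then lam ! (p - 1) else 0)"

definition in_diagram :: "nat list \<Rightarrow> nat \<Rightarrow> nat \<Rightarrow> bool" where
  "in_diagram lam x y \<longleftrightarrow> 1 \<le> x \<and> 1 \<le> y \<and> y \<le> part lam x"

text \<open>Hook length of box (x,y): boxes weakly to its right in row x plus boxes strictly below it.\<close>
definition hook :: "nat list \<Rightarrow> nat \<Rightarrow> nat \<Rightarrow> nat" where
  "hook lam x y = (part lam x + 1 - y) + card {z. x < z \<and> y \<le> part lam z}"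

definition is_core :: "nat \<Rightarrow> nat list \<Rightarrow> bool" where
  "is_core l lam \<longleftrightarrow> is_partition lam \<and>
     (\<forall>x y. in_diagram lam x y \<longrightarrow> \<not> l dvd hook lam x y)"

definition region :: "nat \<Rightarrow> nat list \<Rightarrow> nat \<Rightarrow> int" where
  "region l lam p = (int (part lam p) - int p) div int l + 1"

definition nvec :: "nat \<Rightarrow> nat list \<Rightarrow> int list" where
  "nvec l lam = map (\<lambda>j. Sup {region l lam p | p. 1 \<le> p \<and>
        (int (part lam p) - int p) mod int l = int j}) [0..<l]"

definition Xset :: "nat \<Rightarrow> int list \<Rightarrow> int set" where
  "Xset l b = {r * int l + int j | r j. j < l \<and> r \<le> b ! j}"

definition gapcount :: "nat \<Rightarrow> int list \<Rightarrow> int \<Rightarrow> nat" where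
  "gapcount l b x = card {y. y \<notin> Xset l b \<and> y < x}"

definition pi_l :: "nat \<Rightarrow> int list \<Rightarrow> nat list" where
  "pi_l l b = rev (sorted_list_of_multiset
     (image_mset (gapcount l b) (mset_set {x \<in> Xset l b. 0 < gapcount l b x})))"

end

theory Submission
  imports Defs
begin

text \<open>Place beads at the integers \<open>\<lambda>\<^sub>p - p\<close>, \<open>p \<ge> 1\<close>. For an \<open>\<ell>\<close>-core this bead set is
  closed under subtracting \<open>\<ell>\<close>: if \<open>\<lambda>\<^sub>p - p - \<ell>\<close> were missing, the box of row \<open>p\<close> whose leg
  ends in the last row \<open>q\<close> with \<open>\<lambda>\<^sub>q - q > \<lambda>\<^sub>p - p - \<ell>\<close> would have hook length exactly \<open>\<ell>\<close>.
  So on each runner (residue class mod \<open>\<ell>\<close>) the beads are all positions below the topmost one,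
  whose region is \<open>b\<^sub>j\<close>; hence \<open>X(b)\<close> is the bead set shifted by \<open>\<ell>\<close>. Counting the beads above a
  low threshold once along the rows and once along the runners gives \<open>\<Sum> b\<^sub>j = 0\<close>, and the
  number of gaps below the bead \<open>\<lambda>\<^sub>p - p\<close> is \<open>\<lambda>\<^sub>p\<close>, which recovers the parts from \<open>\<pi>\<^sub>\<ell>(b)\<close>.\<close>

lemma strict_decreasing_crossing:
  fixes f :: "nat \<Rightarrow> int"
  assumes dec: "\<And>n. p \<le> n \<Longrightarrow> f (Suc n) < f n" and "y < f p"
  shows "\<exists>q\<ge>p. y < f q \<and> f (Suc q) \<le> y"
proof (rule ccontr)
  assume "\<not> ?thesis"
  then have stay: "\<And>q. p \<le> q \<Longrightarrow> y < f q \<Longrightarrow> y < f (Suc q)" by force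
  have "y < f (p + k) \<and> f (p + k) \<le> f p - int k" for k
  proof (induction k)
    case (Suc k)
    then show ?case using stay[of "p + k"] dec[of "p + k"] by simp
  qed (use \<open>y < f p\<close> in simp)
  from this[of "nat (f p - y)"] show False using \<open>y < f p\<close> by linarith
qed

lemma down_closed_iterate:
  fixes S :: "int set"
  assumes down: "\<And>x. x \<in> S \<Longrightarrow> x - d \<in> S" and "x \<in> S"
  shows "x - int k * d \<in> S"
proof (induction k)
  case 0 show ?case using \<open>x \<in> S\<close> by simp
next
  case (Suc k)
  then have "x - int k * d - d \<in> S" by (rule down)
  then show ?case by (simp add: algebra_simps)
qed

definition abacus :: "nat \<Rightarrow> (nat \<Rightarrow> int) \<Rightarrow> int set \<Rightarrow> bool" where
  "abacus l c S \<longleftrightarrow> (\<forall>j<l. \<forall>r. r * int l + int j \<in> S \<longleftrightarrow> r < c j)"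

lemma abacus_of_down_closed:
  fixes S :: "int set" and l :: nat
  assumes l: "0 < l"
    and down: "\<And>x. x \<in> S \<Longrightarrow> x - int l \<in> S"
    and bdd: "\<And>x. x \<in> S \<Longrightarrow> x \<le> u"
    and classes: "\<And>j. j < l \<Longrightarrow> \<exists>x\<in>S. x mod int l = int j"
  shows "abacus l (\<lambda>j. Sup ((\<lambda>x. x div int l + 1) ` {x\<in>S. x mod int l = int j})) S"
  unfolding abacus_def
proof (intro allI impI)
  fix j r assume j: "j < l"
  let ?T = "{x\<in>S. x mod int l = int j}"
  let ?R = "(\<lambda>x. x div int l + 1) ` ?T"
  have "?R \<noteq> {}" using classes[OF j] by auto
  moreover have "bdd_above ?R"
    using bdd l by (intro bdd_aboveI[of _ "u div int l + 1"]) (auto intro!: zdiv_mono1)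
  ultimately have less_Sup: "r < Sup ?R \<longleftrightarrow> (\<exists>x\<in>?T. r \<le> x div int l)"
    by (simp add: less_cSup_iff)
  have class_j: "(r * int l + int j) mod int l = int j" "(r * int l + int j) div int l = r"
    using j by simp_all
  show "r * int l + int j \<in> S \<longleftrightarrow> r < Sup ?R"
  proof
    assume "r * int l + int j \<in> S"
    then have "\<exists>x\<in>?T. r \<le> x div int l"
      using class_j by (intro bexI[of _ "r * int l + int j"]) simp_all
    then show "r < Sup ?R" using less_Sup by blast
  next
    assume "r < Sup ?R"
    then obtain x where x: "x \<in> S" "x mod int l = int j" "r \<le> x div int l"
      using less_Sup by blast
    define d where "d = x div int l"
    have "x - int (nat (d - r)) * int l \<in> S"
      by (rule down_closed_iterate[OF down x(1)])
    moreover have "x = d * int l + int j" using x(2) unfolding d_def by (metis div_mult_mod_eq)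
    moreover have "r \<le> d" using x(3) unfolding d_def .
    ultimately show "r * int l + int j \<in> S" by (simp add: algebra_simps)
  qed
qed

lemma abacus_mem_iff:
  assumes "abacus l c S" "0 < l"
  shows "x \<in> S \<longleftrightarrow> x div int l < c (nat (x mod int l))"
proof -
  have "x = x div int l * int l + int (nat (x mod int l))" using assms(2) by simp
  moreover have "nat (x mod int l) < l" using assms(2) by (simp add: nat_less_iff)
  ultimately show ?thesis using assms(1) unfolding abacus_def by metis
qed

lemma Xset_eq_shift:
  assumes "abacus l (nth b) S" "0 < l"
  shows "Xset l b = (\<lambda>x. x + int l) ` S"
proof (intro set_eqI iffI)
  fix z assume "z \<in> Xset l b"
  then obtain r j where "z = r * int l + int j" "j < l" "r \<le> b ! j" by (auto simp: Xset_def)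
  moreover from this(3) have "r - 1 < b ! j" by simp
  ultimately have "(r - 1) * int l + int j \<in> S" using assms(1) unfolding abacus_def by blast
  also have "(r - 1) * int l + int j = z - int l"
    using \<open>z = r * int l + int j\<close> by (simp add: algebra_simps)
  finally have "z - int l \<in> S" .
  then show "z \<in> (\<lambda>x. x + int l) ` S" by force
next
  fix z assume "z \<in> (\<lambda>x. x + int l) ` S"
  then obtain x where x: "x \<in> S" "z = x + int l" by auto
  define j where "j = nat (x mod int l)"
  have "j < l" using assms(2) by (simp add: j_def nat_less_iff)
  moreover have "x div int l < b ! j" using abacus_mem_iff[OF assms] x(1) j_def by simp
  moreover have "z = (x div int l + 1) * int l + int j" using x(2) assms(2)
    by (simp add: j_def algebra_simps)
  ultimately show "z \<in> Xset l b" unfolding Xset_def by force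
qed

lemma gapcount_shift:
  assumes "Xset l b = (\<lambda>x. x + int l) ` S"
  shows "gapcount l b (x + int l) = card {y. y \<notin> S \<and> y < x}"
proof -
  have "{y. y \<notin> Xset l b \<and> y < x + int l} = (\<lambda>y. y + int l) ` {y. y \<notin> S \<and> y < x}"
  proof (intro set_eqI iffI)
    fix y assume "y \<in> {y. y \<notin> Xset l b \<and> y < x + int l}"
    then show "y \<in> (\<lambda>y. y + int l) ` {y. y \<notin> S \<and> y < x}"
      unfolding assms by (intro image_eqI[of _ _ "y - int l"]) force+
  qed (auto simp: assms)
  then show ?thesis unfolding gapcount_def by (simp add: card_image)
qed

lemma card_abacus_ge:
  fixes L :: int
  assumes S: "abacus l c S" and l: "0 < l" and low: "\<And>j. j < l \<Longrightarrow> - L \<le> c j"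
  shows "int (card {x \<in> S. - L * int l \<le> x}) = (\<Sum>j<l. c j + L)"
proof -
  define g where "g = (\<lambda>(j, r). r * int l + int j)"
  define R where "R = Sigma {..<l} (\<lambda>j. {- L..<c j})"
  have "inj_on g R"
  proof (rule inj_onI)
    fix a b assume "a \<in> R" "b \<in> R" "g a = g b"
    then obtain j r j' r' where "a = (j, r)" "b = (j', r')" "j < l" "j' < l"
      and eq: "r * int l + int j = r' * int l + int j'" by (auto simp: R_def g_def)
    moreover have "r = r'" using arg_cong[OF eq, of "\<lambda>x. x div int l"] \<open>j < l\<close> \<open>j' < l\<close> by simp
    moreover have "j = j'" using arg_cong[OF eq, of "\<lambda>x. x mod int l"] \<open>j < l\<close> \<open>j' < l\<close> by simp
    ultimately show "a = b" by simp
  qed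
  moreover have "g ` R = {x \<in> S. - L * int l \<le> x}"
  proof (intro set_eqI iffI)
    fix x assume "x \<in> g ` R"
    then obtain j r where jr: "j < l" "- L \<le> r" "r < c j" "x = r * int l + int j"
      by (auto simp: R_def g_def)
    then have "x \<in> S" using S unfolding abacus_def by blast
    moreover have "- L * int l \<le> r * int l" using jr(2) by (intro mult_right_mono) auto
    ultimately show "x \<in> {x \<in> S. - L * int l \<le> x}" using jr(4) by simp
  next
    fix x assume x: "x \<in> {x \<in> S. - L * int l \<le> x}"
    define j where "j = nat (x mod int l)"
    have "j < l" using l by (simp add: j_def nat_less_iff)
    moreover have "x div int l < c j" using abacus_mem_iff[OF S l] x j_def by simp
    moreover have "- L \<le> x div int l"
    proof -
      have "(- L * int l) div int l \<le> x div int l" using x l by (intro zdiv_mono1) auto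
      moreover have "(- L * int l) div int l = - L"
        using l by (metis nonzero_mult_div_cancel_right of_nat_0_less_iff less_irrefl)
      ultimately show ?thesis by simp
    qed
    moreover have "x = g (j, x div int l)" using l by (simp add: g_def j_def)
    ultimately show "x \<in> g ` R" unfolding R_def by force
  qed
  ultimately have "card {x \<in> S. - L * int l \<le> x} = card R" using card_image by fastforce
  also have "card R = (\<Sum>j<l. nat (c j + L))" by (simp add: R_def)
  also have "int \<dots> = (\<Sum>j<l. c j + L)"
    unfolding of_nat_sum using low by (intro sum.cong) force+
  finally show ?thesis .
qed

lemma part_antimono:
  assumes "is_partition lam" "1 \<le> p" "p \<le> q"
  shows "part lam q \<le> part lam p"
proof (cases "q \<le> length lam")
  case True
  have "sorted_wrt (\<ge>) lam" using assms(1) by (simp add: is_partition_def)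
  then have "lam ! (q - 1) \<le> lam ! (p - 1)"
    using True assms(2,3) by (cases "p = q") (auto simp: sorted_wrt_iff_nth_less)
  then show ?thesis using True assms by (simp add: part_def)
qed (simp add: part_def)

lemma part_eq_0: "length lam < p \<Longrightarrow> part lam p = 0"
  by (simp add: part_def)

lemma part_pos:
  assumes "is_partition lam" "1 \<le> p" "p \<le> length lam"
  shows "0 < part lam p"
proof -
  have "lam ! (p - 1) \<in> set lam" using assms(2,3) by (intro nth_mem) simp
  then have "lam ! (p - 1) \<noteq> 0" using assms(1) unfolding is_partition_def by (metis)
  then show ?thesis using assms(2,3) by (simp add: part_def)
qed

lemma mset_eq_image_part: "mset lam = image_mset (part lam) (mset_set {1..length lam})"
proof -
  have "map (part lam) [1..<Suc (length lam)] = lam"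
    by (rule nth_equalityI) (simp_all add: part_def del: upt_Suc)
  then show ?thesis by (metis atLeastLessThanSuc_atLeastAtMost mset_map mset_upt)
qed

lemma hook_eq_leg:
  assumes lam: "is_partition lam" and "1 \<le> p" "p \<le> q" "c \<le> part lam q" "part lam (Suc q) < c"
  shows "hook lam p c = part lam p + 1 - c + (q - p)"
proof -
  have "{z. p < z \<and> c \<le> part lam z} = {p<..q}"
  proof (intro set_eqI iffI)
    fix z assume z: "z \<in> {z. p < z \<and> c \<le> part lam z}"
    have "z \<le> q"
    proof (rule ccontr)
      assume "\<not> z \<le> q"
      then have "part lam z \<le> part lam (Suc q)" using part_antimono[OF lam, of "Suc q" z] by simp
      then show False using z assms(5) by simp
    qed
    then show "z \<in> {p<..q}" using z by simp
  next
    fix z assume "z \<in> {p<..q}"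
    then show "z \<in> {z. p < z \<and> c \<le> part lam z}"
      using part_antimono[OF lam, of z q] assms(2,4) by auto
  qed
  then show ?thesis by (simp add: hook_def)
qed

(* The region r_p of the box (p, \<lambda>_p) is beta lam p div l + 1. *)
definition beta :: "nat list \<Rightarrow> nat \<Rightarrow> int" where
  "beta lam p = int (part lam p) - int p"

definition beta_set :: "nat list \<Rightarrow> int set" where
  "beta_set lam = beta lam ` {1..}"

lemma beta_strict_antimono:
  "is_partition lam \<Longrightarrow> 1 \<le> p \<Longrightarrow> p < q \<Longrightarrow> beta lam q < beta lam p"
  using part_antimono[of lam p q] by (simp add: beta_def)

lemma inj_on_beta:
  assumes "is_partition lam"
  shows "inj_on (beta lam) {1..}"
proof (rule inj_onI)
  fix p q assume "p \<in> {1..}" "q \<in> {1..}" "beta lam p = beta lam q"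
  then show "p = q"
    using beta_strict_antimono[OF assms, of p q] beta_strict_antimono[OF assms, of q p]
    by (cases p q rule: linorder_cases) auto
qed

lemma beta_beyond_length: "length lam < p \<Longrightarrow> beta lam p = - int p"
  by (simp add: beta_def part_eq_0)

lemma beta_ge: "- int p \<le> beta lam p"
  by (simp add: beta_def)

lemma beta_less_part_1: "is_partition lam \<Longrightarrow> 1 \<le> p \<Longrightarrow> beta lam p < int (part lam 1)"
  using part_antimono[of lam 1 p] by (simp add: beta_def)

lemma beta_in_beta_set: "1 \<le> p \<Longrightarrow> beta lam p \<in> beta_set lam"
  by (simp add: beta_set_def)

lemma beta_set_contains_low: "x < - int (length lam) \<Longrightarrow> x \<in> beta_set lam"
  using beta_in_beta_set[of "nat (- x)" lam] beta_beyond_length[of lam "nat (- x)"] by simp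

lemma low_runner_in_beta_set:
  assumes "0 < l" "j < l" "r < - int (length lam)"
  shows "r * int l + int j \<in> beta_set lam"
proof (rule beta_set_contains_low)
  have "r * int l \<le> (- int (length lam) - 1) * int l"
    using assms(3) by (intro mult_right_mono) auto
  also have "\<dots> \<le> - int (length lam) - int l"
    using assms(1) by (simp add: algebra_simps flip: of_nat_mult)
  finally show "r * int l + int j < - int (length lam)" using assms(2) by simp
qed

lemma card_beta_set_ge:
  assumes lam: "is_partition lam" and N: "length lam \<le> N"
  shows "card {x \<in> beta_set lam. - int N \<le> x} = N"
proof -
  have "{x \<in> beta_set lam. - int N \<le> x} = beta lam ` {1..N}"
  proof (intro set_eqI iffI)
    fix x assume "x \<in> {x \<in> beta_set lam. - int N \<le> x}"
    then obtain p where p: "1 \<le> p" "x = beta lam p" "- int N \<le> beta lam p"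
      by (auto simp: beta_set_def)
    have "p \<le> N" using p(3) N beta_beyond_length[of lam p] by (cases "p \<le> N") auto
    then show "x \<in> beta lam ` {1..N}" using p(1,2) by auto
  next
    fix x assume "x \<in> beta lam ` {1..N}"
    then obtain p where "1 \<le> p" "p \<le> N" "x = beta lam p" by auto
    then show "x \<in> {x \<in> beta_set lam. - int N \<le> x}"
      using beta_in_beta_set[of p lam] beta_ge[of p lam] by simp
  qed
  moreover have "inj_on (beta lam) {1..N}" using inj_on_beta[OF lam] by (rule inj_on_subset) auto
  ultimately show ?thesis by (simp add: card_image)
qed

lemma card_gaps_below_beta:
  assumes lam: "is_partition lam" and p: "1 \<le> p"
  shows "card {y. y \<notin> beta_set lam \<and> y < beta lam p} = part lam p"
proof -
  define T where "T = length lam + p"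
  have "{y. y \<notin> beta_set lam \<and> y < beta lam p} = {- int T..<beta lam p} - beta lam ` {p<..T}"
  proof (intro set_eqI iffI)
    fix y assume y: "y \<in> {y. y \<notin> beta_set lam \<and> y < beta lam p}"
    then have "- int T \<le> y" using beta_set_contains_low[of y lam] by (force simp: T_def)
    moreover have "y \<notin> beta lam ` {p<..T}" using y p beta_in_beta_set by fastforce
    ultimately show "y \<in> {- int T..<beta lam p} - beta lam ` {p<..T}" using y by simp
  next
    fix y assume y: "y \<in> {- int T..<beta lam p} - beta lam ` {p<..T}"
    have "y \<notin> beta_set lam"
    proof
      assume "y \<in> beta_set lam"
      then obtain q where q: "1 \<le> q" "y = beta lam q" by (auto simp: beta_set_def)
      have "p < q"
      proof (rule ccontr)
        assume "\<not> p < q"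
        then have "beta lam p \<le> beta lam q"
          using beta_strict_antimono[OF lam q(1), of p] by (cases "q = p") auto
        then show False using y q(2) by simp
      qed
      moreover have "q \<le> T" using y q beta_beyond_length[of lam q] by (cases "q \<le> T") (auto simp: T_def)
      ultimately show False using y q by auto
    qed
    then show "y \<in> {y. y \<notin> beta_set lam \<and> y < beta lam p}" using y by simp
  qed
  moreover have "beta lam ` {p<..T} \<subseteq> {- int T..<beta lam p}"
  proof
    fix x assume "x \<in> beta lam ` {p<..T}"
    then obtain q where "p < q" "q \<le> T" "x = beta lam q" by auto
    then show "x \<in> {- int T..<beta lam p}"
      using beta_strict_antimono[OF lam p \<open>p < q\<close>] beta_ge[of q lam] by simp
  qed
  moreover have "inj_on (beta lam) {p<..T}" using p by (intro inj_on_subset[OF inj_on_beta[OF lam]]) auto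
  ultimately have "card {y. y \<notin> beta_set lam \<and> y < beta lam p} = nat (beta lam p + int T) - (T - p)"
    by (simp add: card_Diff_subset card_image)
  then show ?thesis by (simp add: T_def beta_def)
qed

lemma core_beta_set_down_closed:
  assumes core: "is_core l lam" and x: "x \<in> beta_set lam"
  shows "x - int l \<in> beta_set lam"
proof (rule ccontr)
  assume gap: "x - int l \<notin> beta_set lam"
  have lam: "is_partition lam" using core by (simp add: is_core_def)
  obtain p where p: "1 \<le> p" "x = beta lam p" using x by (auto simp: beta_set_def)
  define y where "y = beta lam p - int l"
  have "l \<noteq> 0" using gap x by (metis diff_zero of_nat_0)
  then obtain q where q: "p \<le> q" "y < beta lam q" "beta lam (Suc q) \<le> y"
    using strict_decreasing_crossing[of p "beta lam" y] beta_strict_antimono[OF lam] p(1)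
    unfolding y_def by fastforce
  have "beta lam (Suc q) \<noteq> y" using gap beta_in_beta_set[of "Suc q" lam] p(2) y_def by auto
  with q(3) have "beta lam (Suc q) < y" by simp
  define c where "c = nat (y + int q + 1)"
  have c: "1 \<le> c" "c \<le> part lam q" "part lam (Suc q) < c"
    using q(2) \<open>beta lam (Suc q) < y\<close> beta_ge[of "Suc q" lam] by (auto simp: c_def beta_def)
  have "c \<le> part lam p" using c(2) part_antimono[OF lam p(1) q(1)] by simp
  then have "in_diagram lam p c" using c(1) p(1) by (simp add: in_diagram_def)
  moreover have "hook lam p c = l"
    using hook_eq_leg[OF lam p(1) q(1) c(2,3)] \<open>c \<le> part lam p\<close> q(1) c(1)
    unfolding c_def y_def beta_def by simp
  ultimately show False using core unfolding is_core_def by (metis dvd_refl)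
qed

lemma nvec_nth:
  assumes "j < l"
  shows "nvec l lam ! j = Sup ((\<lambda>x. x div int l + 1) ` {x \<in> beta_set lam. x mod int l = int j})"
proof -
  have "{region l lam p |p. 1 \<le> p \<and> (int (part lam p) - int p) mod int l = int j}
      = (\<lambda>x. x div int l + 1) ` {x \<in> beta_set lam. x mod int l = int j}"
    by (auto simp: region_def beta_set_def beta_def)
  then show ?thesis using assms by (simp add: nvec_def)
qed

lemma abacus_nvec:
  assumes core: "is_core l lam" and l: "0 < l"
  shows "abacus l (nth (nvec l lam)) (beta_set lam)"
proof -
  have lam: "is_partition lam" using core by (simp add: is_core_def)
  have "abacus l (\<lambda>j. Sup ((\<lambda>x. x div int l + 1) ` {x \<in> beta_set lam. x mod int l = int j}))
      (beta_set lam)"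
  proof (rule abacus_of_down_closed[OF l])
    show "x - int l \<in> beta_set lam" if "x \<in> beta_set lam" for x
      using core_beta_set_down_closed[OF core that] .
    show "x \<le> int (part lam 1)" if "x \<in> beta_set lam" for x
      using that beta_less_part_1[OF lam] by (force simp: beta_set_def)
    show "\<exists>x\<in>beta_set lam. x mod int l = int j" if "j < l" for j
    proof -
      obtain r :: int where "r < - int (length lam)" using lt_ex by blast
      then show ?thesis using low_runner_in_beta_set[OF l that] that
        by (intro bexI[of _ "r * int l + int j"]) simp_all
    qed
  qed
  then show ?thesis using nvec_nth unfolding abacus_def by simp
qed

lemma sum_nvec_eq_0:
  assumes core: "is_core l lam" and l: "0 < l"
  shows "(\<Sum>j<l. nvec l lam ! j) = 0"
proof -
  have lam: "is_partition lam" using core by (simp add: is_core_def)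
  have abacus: "abacus l (nth (nvec l lam)) (beta_set lam)" by (rule abacus_nvec[OF core l])
  define L where "L = int (length lam + 1)"
  have low: "- L \<le> nvec l lam ! j" if "j < l" for j
  proof -
    have "- L * int l + int j \<in> beta_set lam"
      using low_runner_in_beta_set[OF l that] by (simp add: L_def)
    then have "- L < nvec l lam ! j" using abacus that unfolding abacus_def by blast
    then show ?thesis by simp
  qed
  have "length lam \<le> (length lam + 1) * l" using l by (simp add: trans_le_add2)
  then have "int (card {x \<in> beta_set lam. - L * int l \<le> x}) = L * int l"
    using card_beta_set_ge[OF lam] unfolding L_def by (metis minus_mult_left of_nat_mult)
  moreover have "int (card {x \<in> beta_set lam. - L * int l \<le> x}) = (\<Sum>j<l. nvec l lam ! j + L)"
    by (rule card_abacus_ge[OF abacus l low])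
  ultimately show ?thesis by (simp add: sum.distrib)
qed

lemma pi_l_eq:
  assumes lam: "is_partition lam" and X: "Xset l b = (\<lambda>x. x + int l) ` beta_set lam"
  shows "pi_l l b = lam"
proof -
  define f where "f p = beta lam p + int l" for p
  have gap: "gapcount l b (f p) = part lam p" if "1 \<le> p" for p
    unfolding f_def gapcount_shift[OF X] using card_gaps_below_beta[OF lam that] .
  have pos_gaps: "{x \<in> Xset l b. 0 < gapcount l b x} = f ` {1..length lam}"
  proof (intro set_eqI iffI)
    fix x assume x: "x \<in> {x \<in> Xset l b. 0 < gapcount l b x}"
    then obtain p where p: "1 \<le> p" "x = f p" using X by (auto simp: beta_set_def f_def)
    then have "p \<le> length lam" using x gap[OF p(1)] part_eq_0[of lam p] by (cases "p \<le> length lam") auto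
    then show "x \<in> f ` {1..length lam}" using p by auto
  next
    fix x assume "x \<in> f ` {1..length lam}"
    then obtain p where p: "1 \<le> p" "p \<le> length lam" "x = f p" by auto
    then show "x \<in> {x \<in> Xset l b. 0 < gapcount l b x}"
      using X beta_in_beta_set[OF p(1)] gap[OF p(1)] part_pos[OF lam p(1,2)] by (simp add: f_def)
  qed
  have "inj_on f {1..length lam}"
    using inj_on_beta[OF lam] by (auto simp: f_def inj_on_def)
  then have "image_mset (gapcount l b) (mset_set {x \<in> Xset l b. 0 < gapcount l b x})
      = image_mset (gapcount l b) (image_mset f (mset_set {1..length lam}))"
    by (simp add: pos_gaps image_mset_mset_set)
  also have "\<dots> = image_mset (part lam) (mset_set {1..length lam})"
    unfolding multiset.map_comp using gap by (intro image_mset_cong) auto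
  also have "\<dots> = mset lam" by (rule mset_eq_image_part[symmetric])
  moreover have "sort lam = rev lam"
    using lam by (intro properties_for_sort) (auto simp: is_partition_def sorted_wrt_rev)
  ultimately show ?thesis unfolding pi_l_def by simp
qed

theorem mainTheorem6:
  fixes l :: nat and lam :: "nat list"
  assumes "2 \<le> l" and "is_core l lam"
  shows "length (nvec l lam) = l \<and> sum_list (nvec l lam) = 0 \<and> pi_l l (nvec l lam) = lam"
proof -
  have l: "0 < l" using assms(1) by simp
  have lam: "is_partition lam" using assms(2) by (simp add: is_core_def)
  have len: "length (nvec l lam) = l" by (simp add: nvec_def)
  have "sum_list (nvec l lam) = (\<Sum>j<l. nvec l lam ! j)"
    using len by (simp add: sum_list_sum_nth atLeast0LessThan)
  moreover have "Xset l (nvec l lam) = (\<lambda>x. x + int l) ` beta_set lam"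
    by (rule Xset_eq_shift[OF abacus_nvec[OF assms(2) l] l])
  ultimately show ?thesis using len sum_nvec_eq_0[OF assms(2) l] pi_l_eq[OF lam] by simp
qed

end
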